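(* Let $m\ge1$ and $Q=T_{(2^m)}$. Then $K_Q(2)$ is isomorphic to the dihedral group $D_{2^{m+1}}$ of order $2^{m+1}$.
   Context: Let $\{|0\rangle,|1\rangle\}$ be the computational basis of $\mathbb{C}^2$ and $X$ the Pauli shift $X|q\rangle=|q+1 \bmod 2\rangle$. For $\xi:\mathbb{Z}_2\to U(1)$ let $S_\xi=\mathrm{diag}(\xi(0),\xi(1))$; $T=\{S_\xi:\xi(0)\xi(1)=1\}$ and $T_{(2^m)}=\{S\in T:S^{2^m}=\mathbbm{1}\}$. $K_Q(2)$ is the subgroup of $SU(2)$ generated by all $S_\xi X^b$ with $S_\xi\in Q$, $b\in\mathbb{Z}_2$. $D_{2^{m+1}}$ denotes the dihedral group $\langle r,s\mid r^{2^m}=s^2=1,srs=r^{-1}\rangle$. *)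

theory Defs
  imports "HOL-Analysis.Analysis" "HOL-Algebra.Algebra"
begin

definition mat_monoid :: "(complex^2^2) monoid" where
  "mat_monoid = \<lparr>carrier = UNIV, mult = (\<lambda>A B. A ** B), one = mat 1\<rparr>"

definition GL2 :: "(complex^2^2) monoid" where
  "GL2 = units_of mat_monoid"

definition Xshift :: "complex^2^2" where
  "Xshift = (\<chi> i j. if i = j + 1 then 1 else 0)"

definition Sdiag :: "(2 \<Rightarrow> complex) \<Rightarrow> complex^2^2" where
  "Sdiag \<xi> = (\<chi> i j. if i = j then \<xi> i else 0)"

definition Ttorus :: "(complex^2^2) set" where
  "Ttorus = {Sdiag \<xi> | \<xi>. (\<forall>q. norm (\<xi> q) = 1) \<and> \<xi> 0 * \<xi> 1 = 1}"

definition Ttorus_pow :: "nat \<Rightarrow> (complex^2^2) set" where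
  "Ttorus_pow m = {S \<in> Ttorus. S [^]\<^bsub>mat_monoid\<^esub> ((2::nat)^m) = \<one>\<^bsub>mat_monoid\<^esub>}"

definition KQ :: "(complex^2^2) set \<Rightarrow> (complex^2^2) monoid" where
  "KQ Q = GL2\<lparr>carrier := generate GL2
      {S ** (Xshift [^]\<^bsub>mat_monoid\<^esub> b) | S b. S \<in> Q \<and> b < (2::nat)}\<rparr>"

text \<open>The dihedral group D_N of order N (N = 2n), concretely as Z_n \<rtimes> Z_2:
  (a,s)(b,t) = (a + (-1)^s b mod n, s + t mod 2); r = (1,0), s = (0,1).\<close>
definition dihedral_group :: "nat \<Rightarrow> (int \<times> int) monoid" where
  "dihedral_group N = (let n = int (N div 2) in
     \<lparr>carrier = {0..<n} \<times> {0,1},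
      mult = (\<lambda>(a,s) (b,t). ((a + (-1)^nat s * b) mod n, (s + t) mod 2)),
      one = (0,0)\<rparr>)"

end

theory Submission
  imports Defs
begin

(* An element S_xi of T with S_xi^n = 1 is diag(z, 1/z) for an n-th root of unity z, so
   Q = T_(n) is cyclic of order n, generated by r = diag(w, 1/w) with w = exp(2 pi i / n).
   Conjugation by X swaps the diagonal entries, so X r X = r^-1, and X^2 = 1.  Hence the 2n
   matrices r^a X^s already form a subgroup of GL(2), which is therefore all of K_Q(2), and
   (a, s) |-> r^a X^s is an isomorphism from Z_n x| Z_2 = D_2n onto it. *)

lemma UNIV_2: "(UNIV :: 2 set) = {0, 1}"
proof -
  have "x = 0 \<or> x = 1" for x :: 2
    using exhaust_2[of x] by auto
  then show ?thesis
    by auto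
qed

lemma all_2_iff: "(\<forall>i::2. P i) \<longleftrightarrow> P 0 \<and> P 1"
proof -
  have "(\<forall>i::2. P i) \<longleftrightarrow> (\<forall>i\<in>UNIV. P i)" by simp
  then show ?thesis by (simp add: UNIV_2)
qed

lemma vec2_eq_iff: "(x :: 'a^2) = y \<longleftrightarrow> x $ 0 = y $ 0 \<and> x $ 1 = y $ 1"
  by (simp add: vec_eq_iff all_2_iff)

lemma matrix_mult_2_nth:
  "((A :: 'a::semiring_1^2^2) ** B) $ i $ j = A $ i $ 0 * B $ 0 $ j + A $ i $ 1 * B $ 1 $ j"
  by (simp add: matrix_matrix_mult_def UNIV_2)

lemma Sdiag_nth [simp]: "Sdiag f $ i $ j = (if i = j then f i else 0)"
  by (simp add: Sdiag_def)

lemma Xshift_nth [simp]: "Xshift $ i $ j = (if i = j + 1 then 1 else 0)"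
  by (simp add: Xshift_def)

lemma Sdiag_mult: "Sdiag f ** Sdiag g = Sdiag (\<lambda>i. f i * g i)"
  by (simp add: vec2_eq_iff matrix_mult_2_nth)

lemma Xshift_mult_Xshift: "Xshift ** Xshift = mat 1"
  by (simp add: vec2_eq_iff matrix_mult_2_nth Xshift_def mat_def)

lemma mat_monoid_simps [simp]:
  "carrier mat_monoid = UNIV" "x \<otimes>\<^bsub>mat_monoid\<^esub> y = x ** y" "\<one>\<^bsub>mat_monoid\<^esub> = mat 1"
  by (simp_all add: mat_monoid_def)

lemma Sdiag_pow: "Sdiag f [^]\<^bsub>mat_monoid\<^esub> (k::nat) = Sdiag (\<lambda>i. f i ^ k)"
proof (induction k)
  case 0
  show ?case by (simp add: vec2_eq_iff mat_def)
next
  case (Suc k)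
  then show ?case by (simp add: Sdiag_mult mult.commute)
qed

definition root_unity :: "nat \<Rightarrow> int \<Rightarrow> complex" where
  "root_unity n k = cis (2 * pi * of_int k / of_nat n)"

lemma root_unity_nonzero [simp]: "root_unity n k \<noteq> 0"
  by (simp add: root_unity_def)

lemma root_unity_add: "root_unity n (a + b) = root_unity n a * root_unity n b"
  by (simp add: root_unity_def cis_mult add_divide_distrib distrib_left)

lemma root_unity_diff: "root_unity n (a - b) = root_unity n a * inverse (root_unity n b)"
  by (simp add: root_unity_def cis_mult diff_divide_distrib right_diff_distrib)

lemma root_unity_multiple: "n > 0 \<Longrightarrow> root_unity n (int n * q) = 1"
  using cis_multiple_2pi[of "of_int q"] by (simp add: root_unity_def mult.assoc)

lemma root_unity_mod: "root_unity n (k mod int n) = root_unity n k"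
proof (cases "n = 0")
  case False
  have "root_unity n k = root_unity n (k mod int n + int n * (k div int n))"
    by simp
  also have "\<dots> = root_unity n (k mod int n)"
    using False by (simp only: root_unity_add root_unity_multiple) simp
  finally show ?thesis ..
qed simp

lemma bij_betw_root_unity:
  assumes "n > 0"
  shows "bij_betw (root_unity n) {0..<int n} {z. z ^ n = 1}"
proof -
  have "bij_betw nat {0..<int n} {..<n}"
    by (rule bij_betwI[where g = int]) auto
  then have "bij_betw ((\<lambda>k. cis (2 * pi * real k / real n)) \<circ> nat) {0..<int n} {z. z ^ n = 1}"
    using Complex.bij_betw_roots_unity[OF assms] by (rule bij_betw_trans)
  then show ?thesis
    by (rule bij_betw_cong[THEN iffD1, rotated]) (simp add: root_unity_def)
qed

definition torus_mat :: "complex \<Rightarrow> complex^2^2" where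
  "torus_mat z = Sdiag (\<lambda>i. if i = 0 then z else inverse z)"

lemma torus_mat_mult: "torus_mat z ** torus_mat w = torus_mat (z * w)"
  by (simp add: torus_mat_def Sdiag_mult vec2_eq_iff)

lemma torus_mat_one: "torus_mat 1 = mat 1"
  by (simp add: torus_mat_def vec2_eq_iff mat_def)

lemma torus_mat_pow: "torus_mat z [^]\<^bsub>mat_monoid\<^esub> (k::nat) = torus_mat (z ^ k)"
  by (simp add: torus_mat_def Sdiag_pow vec2_eq_iff power_inverse)

lemma Xshift_mult_torus_mat: "Xshift ** torus_mat z = torus_mat (inverse z) ** Xshift"
  by (simp add: torus_mat_def vec2_eq_iff matrix_mult_2_nth)

lemma Ttorus_torsion_eq:
  assumes "n > 0"
  shows "{S \<in> Ttorus. S [^]\<^bsub>mat_monoid\<^esub> n = \<one>\<^bsub>mat_monoid\<^esub>} = torus_mat ` {z. z ^ n = 1}"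
proof (intro equalityI subsetI)
  fix S
  assume "S \<in> {S \<in> Ttorus. S [^]\<^bsub>mat_monoid\<^esub> n = \<one>\<^bsub>mat_monoid\<^esub>}"
  then obtain \<xi> where S: "S = Sdiag \<xi>" and "\<xi> 0 * \<xi> 1 = 1"
    and pow: "Sdiag \<xi> [^]\<^bsub>mat_monoid\<^esub> n = \<one>\<^bsub>mat_monoid\<^esub>"
    by (auto simp: Ttorus_def)
  then have "\<xi> 1 = inverse (\<xi> 0)"
    by (simp add: inverse_unique mult.commute)
  then have "S = torus_mat (\<xi> 0)"
    by (simp add: S torus_mat_def vec2_eq_iff)
  moreover have "\<xi> 0 ^ n = 1"
    using arg_cong[OF pow, of "\<lambda>A. A $ 0 $ 0"] by (simp add: Sdiag_pow mat_def)
  ultimately show "S \<in> torus_mat ` {z. z ^ n = 1}"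
    by blast
next
  fix S
  assume "S \<in> torus_mat ` {z. z ^ n = 1}"
  then obtain z where S: "S = torus_mat z" and z: "z ^ n = 1"
    by blast
  then have "norm z = 1"
    using assms power_eq_1_iff by blast
  moreover have "z \<noteq> 0"
    using z assms by (auto simp: power_0_left)
  ultimately have "S \<in> Ttorus"
    unfolding S Ttorus_def torus_mat_def
    by (intro CollectI exI[of _ "\<lambda>i. if i = 0 then z else inverse z"]) (auto simp: norm_inverse)
  moreover have "S [^]\<^bsub>mat_monoid\<^esub> n = \<one>\<^bsub>mat_monoid\<^esub>"
    using z by (simp add: S torus_mat_pow torus_mat_one)
  ultimately show "S \<in> {S \<in> Ttorus. S [^]\<^bsub>mat_monoid\<^esub> n = \<one>\<^bsub>mat_monoid\<^esub>}"
    by blast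
qed

definition dihedral_mat :: "nat \<Rightarrow> int \<times> int \<Rightarrow> complex^2^2" where
  "dihedral_mat n = (\<lambda>(a, s). torus_mat (root_unity n a) ** (if s = 0 then mat 1 else Xshift))"

lemma dihedral_group_simps:
  "carrier (dihedral_group (2 * n)) = {0..<int n} \<times> {0, 1}"
  "(a, s) \<otimes>\<^bsub>dihedral_group (2 * n)\<^esub> (b, t) = ((a + (- 1) ^ nat s * b) mod int n, (s + t) mod 2)"
  "\<one>\<^bsub>dihedral_group (2 * n)\<^esub> = (0, 0)"
  unfolding dihedral_group_def Let_def by simp_all

lemma dihedral_mat_mult:
  assumes "s \<in> {0, 1}" "t \<in> {0, 1}"
  shows "dihedral_mat n (a, s) ** dihedral_mat n (b, t)
    = dihedral_mat n ((a + (- 1) ^ nat s * b) mod int n, (s + t) mod 2)"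
proof -
  have X_torus: "A ** Xshift ** torus_mat z = A ** torus_mat (inverse z) ** Xshift" for z A
    by (simp add: Xshift_mult_torus_mat flip: matrix_mul_assoc)
  have torus_torus: "A ** torus_mat z ** torus_mat w = A ** torus_mat (z * w)" for z w A
    by (simp add: torus_mat_mult flip: matrix_mul_assoc)
  have X_X: "A ** Xshift ** Xshift = A" for A
    by (simp add: Xshift_mult_Xshift flip: matrix_mul_assoc)
  note rules = dihedral_mat_def root_unity_mod root_unity_add root_unity_diff matrix_mul_assoc
        X_torus torus_torus X_X torus_mat_mult
  from assms consider "s = 0" "t = 0" | "s = 0" "t = 1" | "s = 1" "t = 0" | "s = 1" "t = 1"
    by blast
  then show ?thesis
    by cases (simp_all add: rules)
qed

lemma dihedral_group_mult_closed:
  assumes "n > 0" "x \<in> carrier (dihedral_group (2 * n))" "y \<in> carrier (dihedral_group (2 * n))"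
  shows "x \<otimes>\<^bsub>dihedral_group (2 * n)\<^esub> y \<in> carrier (dihedral_group (2 * n))"
proof -
  obtain a s b t where xy: "x = (a, s)" "y = (b, t)"
    by fastforce
  have "(s + t) mod 2 \<in> {0, 1}"
    by auto
  then show ?thesis
    using assms(1) by (simp add: xy dihedral_group_simps)
qed

lemma dihedral_group_inverse:
  assumes "n > 0" and x: "x \<in> carrier (dihedral_group (2 * n))"
  obtains y where "y \<in> carrier (dihedral_group (2 * n))"
    "x \<otimes>\<^bsub>dihedral_group (2 * n)\<^esub> y = \<one>\<^bsub>dihedral_group (2 * n)\<^esub>"
    "y \<otimes>\<^bsub>dihedral_group (2 * n)\<^esub> x = \<one>\<^bsub>dihedral_group (2 * n)\<^esub>"
proof -
  obtain a s where a: "x = (a, s)" "0 \<le> a" "a < int n" and s: "s = 0 \<or> s = 1"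
    using x by (auto simp: dihedral_group_simps)
  from s show thesis
  proof
    assume "s = 0"
    have "(a + (- a) mod int n) mod int n = 0" "((- a) mod int n + a) mod int n = 0"
      by (simp_all add: mod_add_right_eq mod_add_left_eq)
    then show thesis
      using assms(1) by (intro that[of "((- a) mod int n, 0)"])
        (simp_all add: a \<open>s = 0\<close> dihedral_group_simps)
  next
    assume "s = 1"
    show thesis
      using x by (intro that[of x]) (simp_all add: a \<open>s = 1\<close> dihedral_group_simps)
  qed
qed

lemma dihedral_mat_hom:
  assumes "x \<in> carrier (dihedral_group (2 * n))" "y \<in> carrier (dihedral_group (2 * n))"
  shows "dihedral_mat n (x \<otimes>\<^bsub>dihedral_group (2 * n)\<^esub> y) = dihedral_mat n x ** dihedral_mat n y"
proof -
  obtain a s b t where "x = (a, s)" "y = (b, t)" "s \<in> {0, 1}" "t \<in> {0, 1}"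
    using assms by (auto simp: dihedral_group_simps)
  then show ?thesis
    by (simp add: dihedral_group_simps dihedral_mat_mult)
qed

lemma dihedral_mat_one: "dihedral_mat n (0, 0) = mat 1"
  by (simp add: dihedral_mat_def root_unity_def torus_mat_one)

lemma dihedral_mat_nth:
  "dihedral_mat n (a, s) $ 0 $ 0 = (if s = 0 then root_unity n a else 0)"
  "dihedral_mat n (a, s) $ 0 $ 1 = (if s = 0 then 0 else root_unity n a)"
  by (simp_all add: dihedral_mat_def torus_mat_def matrix_mult_2_nth mat_def)

lemma dihedral_mat_inj:
  assumes "n > 0"
  shows "inj_on (dihedral_mat n) (carrier (dihedral_group (2 * n)))"
proof (rule inj_onI)
  fix x y
  assume "x \<in> carrier (dihedral_group (2 * n))" "y \<in> carrier (dihedral_group (2 * n))"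
    and eq: "dihedral_mat n x = dihedral_mat n y"
  then obtain a s b t where xy: "x = (a, s)" "y = (b, t)" and ab: "a \<in> {0..<int n}" "b \<in> {0..<int n}"
    and st: "s \<in> {0, 1}" "t \<in> {0, 1}"
    by (auto simp: dihedral_group_simps)
  have "s = t" and root_eq: "root_unity n a = root_unity n b"
    using st arg_cong[OF eq, of "\<lambda>A. A $ 0 $ 0"] arg_cong[OF eq, of "\<lambda>A. A $ 0 $ 1"]
    by (auto simp: xy dihedral_mat_nth split: if_splits)
  moreover have "a = b"
    using bij_betw_imp_inj_on[OF bij_betw_root_unity[OF assms]] root_eq ab by (rule inj_onD)
  ultimately show "x = y"
    by (simp add: xy)
qed

lemma dihedral_mat_image:
  assumes "n > 0"
  shows "dihedral_mat n ` carrier (dihedral_group (2 * n))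
    = {S ** Xshift [^]\<^bsub>mat_monoid\<^esub> b | S b. S \<in> torus_mat ` {z. z ^ n = 1} \<and> b < (2::nat)}"
    (is "_ = ?gens")
proof -
  have roots: "{z. z ^ n = 1} = root_unity n ` {0..<int n}"
    using bij_betw_imp_surj_on[OF bij_betw_root_unity[OF assms]] by simp
  have Xshift_pow: "Xshift [^]\<^bsub>mat_monoid\<^esub> nat s = (if s = 0 then mat 1 else Xshift)"
    if "s \<in> {0, 1}" for s :: int
    using that by auto
  show ?thesis
  proof (intro equalityI subsetI)
    fix M
    assume "M \<in> dihedral_mat n ` carrier (dihedral_group (2 * n))"
    then obtain a s where "a \<in> {0..<int n}" "s \<in> {0, 1}" "M = dihedral_mat n (a, s)"
      unfolding dihedral_group_simps by blast
    then show "M \<in> ?gens"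
      by (intro CollectI exI[of _ "torus_mat (root_unity n a)"] exI[of _ "nat s"])
        (auto simp: dihedral_mat_def roots Xshift_pow)
  next
    fix M
    assume "M \<in> ?gens"
    then obtain a and b :: nat where "a \<in> {0..<int n}" "b < 2"
      and "M = torus_mat (root_unity n a) ** Xshift [^]\<^bsub>mat_monoid\<^esub> b"
      by (auto simp: roots)
    then have "(a, int b) \<in> carrier (dihedral_group (2 * n))" "M = dihedral_mat n (a, int b)"
      using Xshift_pow[of "int b"] by (auto simp: dihedral_group_simps dihedral_mat_def)
    then show "M \<in> dihedral_mat n ` carrier (dihedral_group (2 * n))"
      by blast
  qed
qed

lemma GL2_group: "group GL2"
proof -
  have "monoid mat_monoid"
    by unfold_locales (auto simp: matrix_mul_assoc)
  then show ?thesis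
    unfolding GL2_def by (rule monoid.units_group)
qed

lemma GL2_simps:
  "carrier GL2 = Units mat_monoid" "mult GL2 = (**)" "\<one>\<^bsub>GL2\<^esub> = mat 1"
  by (simp_all add: GL2_def units_of_def mat_monoid_def)

lemma dihedral_mat_subgroup:
  assumes "n > 0"
  shows "subgroup (dihedral_mat n ` carrier (dihedral_group (2 * n))) GL2"
proof -
  interpret GL2: group GL2
    by (rule GL2_group)
  let ?D = "dihedral_group (2 * n)"
  have inverse: "\<exists>y \<in> carrier ?D. dihedral_mat n y ** dihedral_mat n x = mat 1
      \<and> dihedral_mat n x ** dihedral_mat n y = mat 1" if x: "x \<in> carrier ?D" for x
  proof -
    obtain y where y: "y \<in> carrier ?D" "x \<otimes>\<^bsub>?D\<^esub> y = \<one>\<^bsub>?D\<^esub>" "y \<otimes>\<^bsub>?D\<^esub> x = \<one>\<^bsub>?D\<^esub>"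
      using dihedral_group_inverse[OF assms x] .
    then show ?thesis
      using dihedral_mat_hom[OF x y(1)] dihedral_mat_hom[OF y(1) x]
      by (auto simp: dihedral_group_simps dihedral_mat_one)
  qed
  have unit: "dihedral_mat n x \<in> carrier GL2" if "x \<in> carrier ?D" for x
    using inverse[OF that] by (auto simp: GL2_simps Units_def)
  show ?thesis
  proof (rule GL2.subgroupI)
    show "dihedral_mat n ` carrier ?D \<subseteq> carrier GL2"
      using unit by blast
    show "dihedral_mat n ` carrier ?D \<noteq> {}"
      using assms by (auto simp: dihedral_group_simps)
  next
    fix M
    assume "M \<in> dihedral_mat n ` carrier ?D"
    then obtain x where x: "x \<in> carrier ?D" "M = dihedral_mat n x"
      by blast
    then obtain y where "y \<in> carrier ?D" "dihedral_mat n y ** M = mat 1"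
      using inverse by blast
    moreover have "inv\<^bsub>GL2\<^esub> M = dihedral_mat n y"
      using calculation x unit by (intro GL2.inv_equality) (simp_all add: GL2_simps)
    ultimately show "inv\<^bsub>GL2\<^esub> M \<in> dihedral_mat n ` carrier ?D"
      by simp
  next
    fix M N
    assume "M \<in> dihedral_mat n ` carrier ?D" "N \<in> dihedral_mat n ` carrier ?D"
    then obtain x y where "x \<in> carrier ?D" "y \<in> carrier ?D" "M = dihedral_mat n x" "N = dihedral_mat n y"
      by blast
    then show "M \<otimes>\<^bsub>GL2\<^esub> N \<in> dihedral_mat n ` carrier ?D"
      by (simp add: GL2_simps dihedral_group_mult_closed[OF assms] flip: dihedral_mat_hom)
  qed
qed

(* The library's group.iso_set_sym needs the domain to be a group; its proof only uses closure
   under multiplication, which is all we know about dihedral_group a priori. *)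

lemma iso_set_sym_closed:
  assumes h: "h \<in> iso G H"
    and closed: "\<And>x y. x \<in> carrier G \<Longrightarrow> y \<in> carrier G \<Longrightarrow> x \<otimes>\<^bsub>G\<^esub> y \<in> carrier G"
  shows "inv_into (carrier G) h \<in> iso H G"
proof -
  let ?g = "inv_into (carrier G) h"
  have bij: "bij_betw h (carrier G) (carrier H)" and hom: "h \<in> hom G H"
    using h by (auto simp: iso_def)
  have g_bij: "bij_betw ?g (carrier H) (carrier G)"
    using bij by (rule bij_betw_inv_into)
  have g_carrier: "?g x \<in> carrier G" if "x \<in> carrier H" for x
    using bij_betwE[OF g_bij] that by blast
  have "?g \<in> hom H G"
  proof (rule homI)
    show "?g x \<in> carrier G" if "x \<in> carrier H" for x
      using that by (rule g_carrier)
    fix x y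
    assume xy: "x \<in> carrier H" "y \<in> carrier H"
    have gxy: "?g x \<in> carrier G" "?g y \<in> carrier G"
      using xy by (simp_all add: g_carrier)
    show "?g (x \<otimes>\<^bsub>H\<^esub> y) = ?g x \<otimes>\<^bsub>G\<^esub> ?g y"
    proof (rule inv_into_f_eq)
      show "inj_on h (carrier G)"
        using bij by (rule bij_betw_imp_inj_on)
      show "?g x \<otimes>\<^bsub>G\<^esub> ?g y \<in> carrier G"
        using gxy by (rule closed)
      show "h (?g x \<otimes>\<^bsub>G\<^esub> ?g y) = x \<otimes>\<^bsub>H\<^esub> y"
        using bij xy gxy by (simp add: hom_mult[OF hom] bij_betw_inv_into_right)
    qed
  qed
  then show ?thesis
    using g_bij by (rule isoI)
qed

theorem KQ_torsion_iso_dihedral_group: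
  assumes "n > 0"
  shows "KQ {S \<in> Ttorus. S [^]\<^bsub>mat_monoid\<^esub> n = \<one>\<^bsub>mat_monoid\<^esub>} \<cong> dihedral_group (2 * n)"
proof -
  interpret GL2: group GL2
    by (rule GL2_group)
  define Q where "Q = {S \<in> Ttorus. S [^]\<^bsub>mat_monoid\<^esub> n = \<one>\<^bsub>mat_monoid\<^esub>}"
  let ?D = "dihedral_group (2 * n)"
  let ?H = "dihedral_mat n ` carrier ?D"
  have "generate GL2 ?H \<subseteq> ?H"
    by (rule GL2.generate_subgroup_incl[OF order_refl dihedral_mat_subgroup[OF assms]])
  moreover have "?H \<subseteq> generate GL2 ?H"
    by (rule subsetI) (rule generate.incl)
  ultimately have K: "carrier (KQ Q) = ?H" "mult (KQ Q) = (**)"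
    using Ttorus_torsion_eq[OF assms] dihedral_mat_image[OF assms]
    by (simp_all add: KQ_def Q_def GL2_simps)
  have "dihedral_mat n \<in> iso ?D (KQ Q)"
  proof (rule isoI)
    show "dihedral_mat n \<in> hom ?D (KQ Q)"
      by (rule homI) (simp_all add: K dihedral_mat_hom)
    show "bij_betw (dihedral_mat n) (carrier ?D) (carrier (KQ Q))"
      by (simp add: K bij_betw_def dihedral_mat_inj[OF assms])
  qed
  then show ?thesis
    unfolding Q_def using iso_set_sym_closed dihedral_group_mult_closed[OF assms] is_isoI by blast
qed

theorem lemma8:
  fixes m :: nat
  assumes "m \<ge> 1"
  shows "KQ (Ttorus_pow m) \<cong> dihedral_group (2 ^ (m + 1))"
  using KQ_torsion_iso_dihedral_group[of "2 ^ m"] by (simp add: Ttorus_pow_def)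

end
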